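(* Let $Q$ be a quiver, $C\subseteq\Bbbk Q$ a subcoalgebra, and $I$ a finitely generated right coideal of $C$. There exists a right coideal $I'\subseteq C$ containing $I$ and generated by a finite independent set of multipaths in $C$.
   Context: $\Bbbk$ is a field. The path coalgebra $\Bbbk Q$ has basis all paths of $Q$ (including trivial paths, identified with vertices), with $\Delta(p)=\sum_{xy=p}x\otimes y$ ($xy$ = concatenation) and $\varepsilon(p)=1$ if $p$ is trivial, $0$ otherwise. A right coideal of $C$ is a subspace $I$ with $\Delta(I)\subseteq I\otimes C$; for $x\in C$, $\langle x\rangle^C$ is the smallest right coideal of $C$ containing $x$, and a right coideal is generated by a set if it is the smallest right coideal containing it. A multipath is a nonzero linear combination of paths all sharing the same source and the same target; $M(C)$ is the set of multipaths in $C$. A subset $F\subseteq M(C)$ is independent if it is linearly independent and $\langle x\rangle^C\cap F=\{x\}$ for each $x\in F$. *)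

theory Defs
  imports Main
begin

text \<open>A quiver is given by a vertex type 'v, an arrow type 'a and source/target maps
  src, tgt :: 'a \<Rightarrow> 'v. A path is a pair (v, as) of a starting vertex and a list
  of arrows; (v, []) is the trivial path at v.\<close>

type_synonym ('v,'a) qpath = "'v \<times> 'a list"

definition valid_path :: "('a \<Rightarrow> 'v) \<Rightarrow> ('a \<Rightarrow> 'v) \<Rightarrow> ('v,'a) qpath \<Rightarrow> bool" where
  "valid_path src tgt p = (case snd p of [] \<Rightarrow> True
     | a # _ \<Rightarrow> src a = fst p \<and>
         (\<forall>i. Suc i < length (snd p) \<longrightarrow> tgt (snd p ! i) = src (snd p ! Suc i)))"

definition psrc :: "('v,'a) qpath \<Rightarrow> 'v" where
  "psrc p = fst p"

definition ptgt :: "('a \<Rightarrow> 'v) \<Rightarrow> ('v,'a) qpath \<Rightarrow> 'v" where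
  "ptgt tgt p = (if snd p = [] then fst p else tgt (last (snd p)))"

definition pconcat :: "('v,'a) qpath \<Rightarrow> ('v,'a) qpath \<Rightarrow> ('v,'a) qpath" where
  "pconcat p q = (fst p, snd p @ snd q)"

text \<open>Elements of the path coalgebra kQ: finitely supported functions on paths,
  supported on valid paths (coefficient of each basis path).\<close>
definition pathcoalg :: "('a \<Rightarrow> 'v) \<Rightarrow> ('a \<Rightarrow> 'v) \<Rightarrow> (('v,'a) qpath \<Rightarrow> 'k::field) set" where
  "pathcoalg src tgt = {f. finite {p. f p \<noteq> 0} \<and> (\<forall>p. f p \<noteq> 0 \<longrightarrow> valid_path src tgt p)}"

text \<open>Comultiplication kQ \<rightarrow> kQ \<otimes> kQ; kQ \<otimes> kQ is represented by (finitely supported)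
  functions on pairs of paths, the basis of kQ \<otimes> kQ being the pairs of paths.\<close>
definition comult :: "('a \<Rightarrow> 'v) \<Rightarrow> ('a \<Rightarrow> 'v) \<Rightarrow> (('v,'a) qpath \<Rightarrow> 'k::field)
    \<Rightarrow> (('v,'a) qpath \<times> ('v,'a) qpath \<Rightarrow> 'k)" where
  "comult src tgt f = (\<lambda>(x, y). if valid_path src tgt x \<and> valid_path src tgt y \<and> ptgt tgt x = psrc y
                                then f (pconcat x y) else 0)"

definition tens :: "('b \<Rightarrow> 'k::field) \<Rightarrow> ('b \<Rightarrow> 'k) \<Rightarrow> ('b \<times> 'b \<Rightarrow> 'k)" where
  "tens a b = (\<lambda>(x, y). a x * b y)"

definition lspan :: "('b \<Rightarrow> 'k::field) set \<Rightarrow> ('b \<Rightarrow> 'k) set" where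
  "lspan S = {g. \<exists>n (c :: nat \<Rightarrow> 'k) v. (\<forall>i<n. v i \<in> S) \<and> g = (\<lambda>z. \<Sum>i<n. c i * v i z)}"

definition lsubspace :: "('b \<Rightarrow> 'k::field) set \<Rightarrow> bool" where
  "lsubspace S \<longleftrightarrow> (\<lambda>_. 0) \<in> S \<and> (\<forall>x\<in>S. \<forall>y\<in>S. (\<lambda>z. x z + y z) \<in> S)
     \<and> (\<forall>c. \<forall>x\<in>S. (\<lambda>z. c * x z) \<in> S)"

definition lin_indep :: "('b \<Rightarrow> 'k::field) set \<Rightarrow> bool" where
  "lin_indep F \<longleftrightarrow> (\<forall>G c. G \<subseteq> F \<and> finite G \<and> (\<lambda>z. \<Sum>g\<in>G. c g * g z) = (\<lambda>_. 0)
        \<longrightarrow> (\<forall>g\<in>G. c g = 0))"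

definition tensor_sub :: "('b \<Rightarrow> 'k::field) set \<Rightarrow> ('b \<Rightarrow> 'k) set \<Rightarrow> ('b \<times> 'b \<Rightarrow> 'k) set" where
  "tensor_sub A B = lspan {tens a b | a b. a \<in> A \<and> b \<in> B}"

definition subcoalgebra :: "('a \<Rightarrow> 'v) \<Rightarrow> ('a \<Rightarrow> 'v) \<Rightarrow> (('v,'a) qpath \<Rightarrow> 'k::field) set \<Rightarrow> bool" where
  "subcoalgebra src tgt C \<longleftrightarrow> C \<subseteq> pathcoalg src tgt \<and> lsubspace C
     \<and> (\<forall>x\<in>C. comult src tgt x \<in> tensor_sub C C)"

definition right_coideal :: "('a \<Rightarrow> 'v) \<Rightarrow> ('a \<Rightarrow> 'v) \<Rightarrow> (('v,'a) qpath \<Rightarrow> 'k::field) set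
    \<Rightarrow> (('v,'a) qpath \<Rightarrow> 'k) set \<Rightarrow> bool" where
  "right_coideal src tgt C I \<longleftrightarrow> I \<subseteq> C \<and> lsubspace I
     \<and> (\<forall>x\<in>I. comult src tgt x \<in> tensor_sub I C)"

definition rc_gen :: "('a \<Rightarrow> 'v) \<Rightarrow> ('a \<Rightarrow> 'v) \<Rightarrow> (('v,'a) qpath \<Rightarrow> 'k::field) set
    \<Rightarrow> (('v,'a) qpath \<Rightarrow> 'k) set \<Rightarrow> (('v,'a) qpath \<Rightarrow> 'k) set" where
  "rc_gen src tgt C S = \<Inter> {J. right_coideal src tgt C J \<and> S \<subseteq> J}"

definition generated_by :: "('a \<Rightarrow> 'v) \<Rightarrow> ('a \<Rightarrow> 'v) \<Rightarrow> (('v,'a) qpath \<Rightarrow> 'k::field) set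
    \<Rightarrow> (('v,'a) qpath \<Rightarrow> 'k) set \<Rightarrow> (('v,'a) qpath \<Rightarrow> 'k) set \<Rightarrow> bool" where
  "generated_by src tgt C S I \<longleftrightarrow> right_coideal src tgt C I \<and> S \<subseteq> I
     \<and> (\<forall>J. right_coideal src tgt C J \<and> S \<subseteq> J \<longrightarrow> I \<subseteq> J)"

definition multipaths :: "('a \<Rightarrow> 'v) \<Rightarrow> (('v,'a) qpath \<Rightarrow> 'k::field) set \<Rightarrow> (('v,'a) qpath \<Rightarrow> 'k) set" where
  "multipaths tgt C = {x \<in> C. x \<noteq> (\<lambda>_. 0) \<and>
      (\<exists>v w. \<forall>p. x p \<noteq> 0 \<longrightarrow> psrc p = v \<and> ptgt tgt p = w)}"

definition independent :: "('a \<Rightarrow> 'v) \<Rightarrow> ('a \<Rightarrow> 'v) \<Rightarrow> (('v,'a) qpath \<Rightarrow> 'k::field) set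
    \<Rightarrow> (('v,'a) qpath \<Rightarrow> 'k) set \<Rightarrow> bool" where
  "independent src tgt C F \<longleftrightarrow> F \<subseteq> multipaths tgt C \<and> lin_indep F
     \<and> (\<forall>x\<in>F. rc_gen src tgt C {x} \<inter> F = {x})"

end

(* Splitting every generator according to the source and target of its paths writes it as a
   sum of multipaths; these stay in C because the slices of the comultiplication at trivial
   paths are exactly the source and target restrictions. From this finite set of multipaths
   discard, one at a time, any element lying in the right coideal generated by the others.
   The resulting irredundant generating set is independent: a linear dependence, or one member
   generating another, would make some member redundant. The one non-formal point is that the
   right coideal generated by a set is again a right coideal, i.e. that intersecting the spaces
   J \<otimes> C stays of that form; this follows by Gaussian elimination on the right tensor factors. *)

theory Submission
  imports Defs
begin

lemma lsubspace_zero: "lsubspace S \<Longrightarrow> (\<lambda>_. 0) \<in> S"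
  by (simp add: lsubspace_def)

lemma lsubspace_add: "lsubspace S \<Longrightarrow> x \<in> S \<Longrightarrow> y \<in> S \<Longrightarrow> (\<lambda>z. x z + y z) \<in> S"
  by (simp add: lsubspace_def)

lemma lsubspace_scale: "lsubspace S \<Longrightarrow> x \<in> S \<Longrightarrow> (\<lambda>z. c * x z) \<in> S"
  by (simp add: lsubspace_def)

lemma lsubspace_diff_scale:
  assumes "lsubspace S" "x \<in> S" "y \<in> S"
  shows "(\<lambda>z. x z - c * y z) \<in> S"
  using lsubspace_add[OF assms(1,2) lsubspace_scale[OF assms(1,3), of "- c"]] by simp

lemma lsubspace_sum:
  assumes "lsubspace S" "finite A" "\<And>a. a \<in> A \<Longrightarrow> f a \<in> S"
  shows "(\<lambda>z. \<Sum>a\<in>A. f a z) \<in> S"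
  using assms(2,3)
proof (induction A rule: finite_induct)
  case empty
  then show ?case using assms(1) by (simp add: lsubspace_zero)
next
  case (insert x A)
  have "(\<lambda>z. f x z + (\<Sum>a\<in>A. f a z)) \<in> S"
    using insert by (intro lsubspace_add[OF assms(1)]) auto
  with insert show ?case by simp
qed

definition tens_sum :: "nat \<Rightarrow> (nat \<Rightarrow> 'b \<Rightarrow> 'k::field) \<Rightarrow> (nat \<Rightarrow> 'b \<Rightarrow> 'k) \<Rightarrow> ('b \<times> 'b \<Rightarrow> 'k)" where
  "tens_sum n a b = (\<lambda>(p, q). \<Sum>i<n. a i p * b i q)"

lemma tens_sum_apply: "tens_sum n a b (p, q) = (\<Sum>i<n. a i p * b i q)"
  by (simp add: tens_sum_def)

lemma tens_sum_Suc_apply: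
  "tens_sum (Suc n) a b (p, q) = tens_sum n a b (p, q) + a n p * b n q"
  by (simp add: tens_sum_apply)

lemma tens_sum_in_tensor_sub:
  assumes "\<And>i. i < n \<Longrightarrow> a i \<in> A \<and> b i \<in> B"
  shows "tens_sum n a b \<in> tensor_sub A B"
proof -
  have "tens_sum n a b = (\<lambda>z. \<Sum>i<n. 1 * tens (a i) (b i) z)"
    by (auto simp: tens_sum_def tens_def)
  moreover have "\<forall>i<n. tens (a i) (b i) \<in> {tens a b | a b. a \<in> A \<and> b \<in> B}"
    using assms by blast
  ultimately show ?thesis
    unfolding tensor_sub_def lspan_def
    by (intro CollectI exI[of _ n] exI[of _ "\<lambda>_. 1"] exI[of _ "\<lambda>i. tens (a i) (b i)"]) auto
qed

lemma tensor_sub_obtain_tens_sum: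
  assumes "lsubspace A" "g \<in> tensor_sub A B"
  obtains n a b where "\<And>i. i < n \<Longrightarrow> a i \<in> A \<and> b i \<in> B" "g = tens_sum n a b"
proof -
  obtain n :: nat and c v where v: "\<forall>i<n. v i \<in> {tens a b | a b. a \<in> A \<and> b \<in> B}"
    and g: "g = (\<lambda>z. \<Sum>i<n. c i * v i z)"
    using assms(2) unfolding tensor_sub_def lspan_def by blast
  have "\<forall>i. \<exists>a b. i < n \<longrightarrow> v i = tens a b \<and> a \<in> A \<and> b \<in> B"
    using v by blast
  then obtain a b where ab: "\<And>i. i < n \<Longrightarrow> v i = tens (a i) (b i) \<and> a i \<in> A \<and> b i \<in> B"
    by metis
  show thesis
  proof (rule that)
    show "(\<lambda>p. c i * a i p) \<in> A \<and> b i \<in> B" if "i < n" for i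
      using ab[OF that] lsubspace_scale[OF assms(1)] by blast
    show "g = tens_sum n (\<lambda>i p. c i * a i p) b"
    proof (rule ext, clarify)
      fix p q
      show "g (p, q) = tens_sum n (\<lambda>i p. c i * a i p) b (p, q)"
        unfolding g tens_sum_apply by (rule sum.cong) (auto simp: ab tens_def)
    qed
  qed
qed

lemma tensor_sub_left_slice:
  assumes "lsubspace A" "g \<in> tensor_sub A B"
  shows "(\<lambda>p. g (p, q)) \<in> A"
proof -
  obtain n a b where ab: "\<And>i. i < n \<Longrightarrow> a i \<in> A \<and> b i \<in> B" and g: "g = tens_sum n a b"
    using tensor_sub_obtain_tens_sum[OF assms] by blast
  have "(\<lambda>p. \<Sum>i<n. b i q * a i p) \<in> A"
    using ab by (intro lsubspace_sum[OF assms(1)] lsubspace_scale[OF assms(1)]) auto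
  then show ?thesis by (simp add: g tens_sum_apply mult.commute)
qed

lemma tensor_sub_right_slice:
  assumes "lsubspace A" "lsubspace B" "g \<in> tensor_sub A B"
  shows "(\<lambda>q. g (p, q)) \<in> B"
proof -
  obtain n a b where ab: "\<And>i. i < n \<Longrightarrow> a i \<in> A \<and> b i \<in> B" and g: "g = tens_sum n a b"
    using tensor_sub_obtain_tens_sum[OF assms(1,3)] by blast
  have "(\<lambda>q. \<Sum>i<n. a i p * b i q) \<in> B"
    using ab by (intro lsubspace_sum[OF assms(2)] lsubspace_scale[OF assms(2)]) auto
  then show ?thesis by (simp add: g tens_sum_apply)
qed

lemma tens_sum_pivot:
  fixes a b :: "nat \<Rightarrow> 'b \<Rightarrow> 'k::field"
  assumes "b n q0 \<noteq> 0"
  shows "tens_sum (Suc n) a b (p, q)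
    = tens_sum n a (\<lambda>i q. b i q - b i q0 * (b n q / b n q0)) (p, q)
      + tens_sum (Suc n) a b (p, q0) * (b n q / b n q0)"
proof -
  define r where "r q = b n q / b n q0" for q
  have "tens_sum n a (\<lambda>i q. b i q - b i q0 * r q) (p, q)
      = tens_sum n a b (p, q) - tens_sum n a b (p, q0) * r q"
    by (simp add: tens_sum_apply right_diff_distrib sum_subtractf sum_distrib_right mult.assoc)
  moreover have "a n p * b n q = a n p * b n q0 * r q"
    using assms by (simp add: r_def)
  ultimately show ?thesis
    unfolding r_def[symmetric] tens_sum_Suc_apply by (simp add: algebra_simps)
qed

text \<open>Gaussian elimination: for a pivot \<open>b n q0 \<noteq> 0\<close>, the left slice at \<open>q0\<close> splits off the
  last summand (\<open>tens_sum_pivot\<close>) and the remaining summands keep their left slices in \<open>A\<close>.\<close>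
lemma tens_sum_left_slices:
  assumes A: "lsubspace A" and D: "lsubspace D"
    and "\<And>i. i < n \<Longrightarrow> b i \<in> D"
    and "\<And>q. (\<lambda>p. tens_sum n a b (p, q)) \<in> A"
  shows "tens_sum n a b \<in> tensor_sub A D"
  using assms(3,4)
proof (induction n arbitrary: b)
  case 0
  then show ?case by (intro tens_sum_in_tensor_sub) simp
next
  case (Suc n)
  show ?case
  proof (cases "\<forall>q. b n q = 0")
    case True
    then have "tens_sum (Suc n) a b = tens_sum n a b"
      by (auto simp: tens_sum_Suc_apply)
    with Suc show ?thesis by simp
  next
    case False
    then obtain q0 where q0: "b n q0 \<noteq> 0" by blast
    define s where "s = (\<lambda>p. tens_sum (Suc n) a b (p, q0))"
    define c where "c = (\<lambda>q. b n q / b n q0)"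
    define b' where "b' i q = b i q - b i q0 * c q" for i q
    have split: "tens_sum (Suc n) a b (p, q) = tens_sum n a b' (p, q) + s p * c q" for p q
      unfolding s_def c_def b'_def by (rule tens_sum_pivot[where b = b, OF q0])
    have sA: "s \<in> A" using Suc.prems(2)[of q0] by (simp add: s_def)
    have cD: "c \<in> D"
      using lsubspace_scale[OF D Suc.prems(1), of n "1 / b n q0"] by (simp add: c_def)
    have "tens_sum n a b' \<in> tensor_sub A D"
    proof (rule Suc.IH)
      show "b' i \<in> D" if "i < n" for i
        unfolding b'_def using that Suc.prems(1) cD by (intro lsubspace_diff_scale[OF D]) auto
      show "(\<lambda>p. tens_sum n a b' (p, q)) \<in> A" for q
        using lsubspace_diff_scale[OF A Suc.prems(2)[of q] sA, of "c q"]
        by (simp add: split mult.commute)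
    qed
    then obtain m a' b'' where ab: "\<And>i. i < m \<Longrightarrow> a' i \<in> A \<and> b'' i \<in> D"
      and eq: "tens_sum n a b' = tens_sum m a' b''"
      using tensor_sub_obtain_tens_sum[OF A] by blast
    have "tens_sum m (a'(m := s)) (b''(m := c)) = tens_sum m a' b''"
      by (auto simp: tens_sum_def intro!: sum.cong)
    then have "tens_sum (Suc n) a b = tens_sum (Suc m) (a'(m := s)) (b''(m := c))"
      by (intro ext) (auto simp: split tens_sum_Suc_apply[of m] eq)
    moreover have "tens_sum (Suc m) (a'(m := s)) (b''(m := c)) \<in> tensor_sub A D"
      using ab sA cD by (intro tens_sum_in_tensor_sub) (auto simp: less_Suc_eq)
    ultimately show ?thesis by simp
  qed
qed

lemma rc_gen_iff:
  "x \<in> rc_gen src tgt C M \<longleftrightarrow> (\<forall>J. right_coideal src tgt C J \<longrightarrow> M \<subseteq> J \<longrightarrow> x \<in> J)"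
  unfolding rc_gen_def by blast

lemma subset_rc_gen: "M \<subseteq> rc_gen src tgt C M"
  unfolding rc_gen_def by blast

lemma rc_gen_mono: "M \<subseteq> N \<Longrightarrow> rc_gen src tgt C M \<subseteq> rc_gen src tgt C N"
  unfolding rc_gen_def by blast

lemma rc_gen_least: "N \<subseteq> rc_gen src tgt C M \<Longrightarrow> rc_gen src tgt C N \<subseteq> rc_gen src tgt C M"
  unfolding rc_gen_def by blast

lemma lsubspace_rc_gen: "lsubspace (rc_gen src tgt C M)"
  unfolding rc_gen_def right_coideal_def lsubspace_def by blast

lemma generated_by_subset_rc_gen: "generated_by src tgt C S I \<Longrightarrow> I \<subseteq> rc_gen src tgt C S"
  unfolding generated_by_def rc_gen_def by blast

lemma generated_by_rc_gen:
  "right_coideal src tgt C (rc_gen src tgt C M) \<Longrightarrow> generated_by src tgt C M (rc_gen src tgt C M)"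
  unfolding generated_by_def rc_gen_def by blast

text \<open>The left slices of \<open>\<Delta>(x)\<close> lie in every right coideal containing \<open>M\<close>.\<close>
lemma right_coideal_rc_gen:
  assumes C: "subcoalgebra src tgt C" and M: "M \<subseteq> C"
  shows "right_coideal src tgt C (rc_gen src tgt C M)"
proof -
  have lsC: "lsubspace C" using C by (simp add: subcoalgebra_def)
  have RC: "rc_gen src tgt C M \<subseteq> C"
    using C M by (auto simp: rc_gen_iff subcoalgebra_def right_coideal_def)
  have "comult src tgt x \<in> tensor_sub (rc_gen src tgt C M) C" if x: "x \<in> rc_gen src tgt C M" for x
  proof -
    have "comult src tgt x \<in> tensor_sub C C"
      using C RC x by (auto simp: subcoalgebra_def)
    then obtain n a b where ab: "\<And>i. i < n \<Longrightarrow> a i \<in> C \<and> b i \<in> C"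
      and cm: "comult src tgt x = tens_sum n a b"
      using tensor_sub_obtain_tens_sum[OF lsC] by blast
    have "(\<lambda>p. comult src tgt x (p, q)) \<in> rc_gen src tgt C M" for q
      unfolding rc_gen_iff
    proof (intro allI impI)
      fix J assume J: "right_coideal src tgt C J" "M \<subseteq> J"
      then have "comult src tgt x \<in> tensor_sub J C"
        using x by (auto simp: rc_gen_iff right_coideal_def)
      then show "(\<lambda>p. comult src tgt x (p, q)) \<in> J"
        using J(1) by (intro tensor_sub_left_slice) (auto simp: right_coideal_def)
    qed
    then show ?thesis
      unfolding cm using ab by (intro tens_sum_left_slices[OF lsubspace_rc_gen lsC]) auto
  qed
  with RC show ?thesis by (simp add: right_coideal_def lsubspace_rc_gen)
qed

definition endpoint_part :: "('a \<Rightarrow> 'v) \<Rightarrow> 'v \<times> 'v \<Rightarrow> (('v,'a) qpath \<Rightarrow> 'k::field) \<Rightarrow> (('v,'a) qpath \<Rightarrow> 'k)" where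
  "endpoint_part tgt vw x = (\<lambda>p. if (psrc p, ptgt tgt p) = vw then x p else 0)"

lemma pathcoalg_valid: "x \<in> pathcoalg src tgt \<Longrightarrow> x p \<noteq> 0 \<Longrightarrow> valid_path src tgt p"
  unfolding pathcoalg_def by blast

lemma comult_trivial_left:
  "x \<in> pathcoalg src tgt \<Longrightarrow> comult src tgt x ((v, []), q) = (if psrc q = v then x q else 0)"
  using pathcoalg_valid[of x src tgt q]
  by (cases q) (auto simp: comult_def valid_path_def ptgt_def psrc_def pconcat_def)

lemma comult_trivial_right:
  "x \<in> pathcoalg src tgt \<Longrightarrow> comult src tgt x (p, (w, [])) = (if ptgt tgt p = w then x p else 0)"
  using pathcoalg_valid[of x src tgt p]
  by (cases p) (auto simp: comult_def valid_path_def ptgt_def psrc_def pconcat_def)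

lemma endpoint_part_in_subcoalgebra:
  assumes C: "subcoalgebra src tgt C" and x: "x \<in> C"
  shows "endpoint_part tgt (v, w) x \<in> C"
proof -
  have lsC: "lsubspace C" and pc: "C \<subseteq> pathcoalg src tgt"
    and cm: "\<And>y. y \<in> C \<Longrightarrow> comult src tgt y \<in> tensor_sub C C"
    using C by (auto simp: subcoalgebra_def)
  define y where "y = (\<lambda>q. if psrc q = v then x q else 0)"
  have "(\<lambda>q. comult src tgt x ((v, []), q)) \<in> C"
    using tensor_sub_right_slice[OF lsC lsC cm[OF x]] .
  then have y: "y \<in> C"
    using x pc by (auto simp: y_def comult_trivial_left)
  have "(\<lambda>p. comult src tgt y (p, (w, []))) \<in> C"
    using tensor_sub_left_slice[OF lsC cm[OF y]] .
  moreover have "(\<lambda>p. comult src tgt y (p, (w, []))) = endpoint_part tgt (v, w) x"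
    using y pc by (subst comult_trivial_right) (auto simp: y_def endpoint_part_def)
  ultimately show ?thesis by simp
qed

lemma endpoint_part_multipath:
  assumes "subcoalgebra src tgt C" "x \<in> C" "endpoint_part tgt vw x \<noteq> (\<lambda>_. 0)"
  shows "endpoint_part tgt vw x \<in> multipaths tgt C"
  using assms endpoint_part_in_subcoalgebra[OF assms(1,2), of "fst vw" "snd vw"]
  unfolding multipaths_def by (auto simp: endpoint_part_def split: if_splits)

lemma multipath_decomposition:
  assumes C: "subcoalgebra src tgt C" and x: "x \<in> C"
  obtains M where "finite M" "M \<subseteq> multipaths tgt C" "x = (\<lambda>z. \<Sum>m\<in>M. m z)"
proof -
  define E where "E = (\<lambda>p. (psrc p, ptgt tgt p)) ` {p. x p \<noteq> 0}"
  define M where "M = (\<lambda>vw. endpoint_part tgt vw x) ` E"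
  have fE: "finite E"
    using x C by (auto simp: E_def subcoalgebra_def pathcoalg_def)
  have witness: "\<exists>p. endpoint_part tgt vw x p \<noteq> 0 \<and> (psrc p, ptgt tgt p) = vw" if "vw \<in> E" for vw
    using that by (auto simp: E_def endpoint_part_def)
  have inj: "inj_on (\<lambda>vw. endpoint_part tgt vw x) E"
  proof (rule inj_onI)
    fix vw vw' assume "vw \<in> E" "endpoint_part tgt vw x = endpoint_part tgt vw' x"
    then show "vw = vw'"
      using witness by (metis endpoint_part_def)
  qed
  show thesis
  proof (rule that)
    show "finite M" using fE by (simp add: M_def)
    show "M \<subseteq> multipaths tgt C"
      using witness by (force simp: M_def intro: endpoint_part_multipath[OF C x])
    show "x = (\<lambda>z. \<Sum>m\<in>M. m z)"
    proof
      fix z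
      have "(\<Sum>m\<in>M. m z) = (\<Sum>vw\<in>E. endpoint_part tgt vw x z)"
        unfolding M_def by (simp add: sum.reindex[OF inj])
      also have "\<dots> = x z"
        using fE by (auto simp: endpoint_part_def E_def)
      finally show "x z = (\<Sum>m\<in>M. m z)" by simp
    qed
  qed
qed

lemma finite_subset_rc_gen_multipaths:
  assumes C: "subcoalgebra src tgt C" and S: "finite S" "S \<subseteq> C"
  obtains M where "finite M" "M \<subseteq> multipaths tgt C" "S \<subseteq> rc_gen src tgt C M"
proof -
  have "\<forall>s\<in>S. \<exists>M. finite M \<and> M \<subseteq> multipaths tgt C \<and> s = (\<lambda>z. \<Sum>m\<in>M. m z)"
    using S(2) by (metis subsetD multipath_decomposition[OF C])
  then obtain Ms where Ms: "\<And>s. s \<in> S \<Longrightarrow> finite (Ms s) \<and> Ms s \<subseteq> multipaths tgt C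
      \<and> s = (\<lambda>z. \<Sum>m\<in>Ms s. m z)"
    by metis
  show thesis
  proof (rule that)
    show "finite (\<Union> (Ms ` S))" using S(1) Ms by blast
    show "\<Union> (Ms ` S) \<subseteq> multipaths tgt C" using Ms by blast
    show "S \<subseteq> rc_gen src tgt C (\<Union> (Ms ` S))"
    proof
      fix s assume s: "s \<in> S"
      have "Ms s \<subseteq> rc_gen src tgt C (\<Union> (Ms ` S))"
        using s subset_rc_gen by blast
      then have "(\<lambda>z. \<Sum>m\<in>Ms s. m z) \<in> rc_gen src tgt C (\<Union> (Ms ` S))"
        using Ms[OF s] by (intro lsubspace_sum[OF lsubspace_rc_gen]) auto
      with Ms[OF s] show "s \<in> rc_gen src tgt C (\<Union> (Ms ` S))" by simp
    qed
  qed
qed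

definition rc_irredundant :: "('a \<Rightarrow> 'v) \<Rightarrow> ('a \<Rightarrow> 'v) \<Rightarrow> (('v,'a) qpath \<Rightarrow> 'k::field) set
    \<Rightarrow> (('v,'a) qpath \<Rightarrow> 'k) set \<Rightarrow> bool" where
  "rc_irredundant src tgt C F \<longleftrightarrow> (\<forall>y\<in>F. y \<notin> rc_gen src tgt C (F - {y}))"

lemma rc_gen_remove_redundant:
  assumes "y \<in> rc_gen src tgt C (F - {y})"
  shows "rc_gen src tgt C (F - {y}) = rc_gen src tgt C F"
proof
  show "rc_gen src tgt C (F - {y}) \<subseteq> rc_gen src tgt C F"
    by (rule rc_gen_mono) blast
  have "F \<subseteq> rc_gen src tgt C (F - {y})"
    using assms subset_rc_gen[of "F - {y}" src tgt C] by blast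
  then show "rc_gen src tgt C F \<subseteq> rc_gen src tgt C (F - {y})"
    by (rule rc_gen_least)
qed

lemma exists_rc_irredundant_subset:
  "finite M \<Longrightarrow> \<exists>F\<subseteq>M. rc_gen src tgt C F = rc_gen src tgt C M \<and> rc_irredundant src tgt C F"
proof (induction M rule: finite_psubset_induct)
  case (psubset M)
  show ?case
  proof (cases "rc_irredundant src tgt C M")
    case True
    then show ?thesis by blast
  next
    case False
    then obtain y where y: "y \<in> M" "y \<in> rc_gen src tgt C (M - {y})"
      by (auto simp: rc_irredundant_def)
    then obtain F where "F \<subseteq> M - {y}" "rc_gen src tgt C F = rc_gen src tgt C (M - {y})"
      "rc_irredundant src tgt C F"
      using psubset.IH[of "M - {y}"] by blast
    with rc_gen_remove_redundant[OF y(2)] show ?thesis by blast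
  qed
qed

lemma lin_indep_if_rc_irredundant:
  assumes irr: "rc_irredundant src tgt C F"
  shows "lin_indep F"
  unfolding lin_indep_def
proof (intro allI impI ballI)
  fix G c g0
  assume G: "G \<subseteq> F \<and> finite G \<and> (\<lambda>z. \<Sum>g\<in>G. c g * g z) = (\<lambda>_. 0)" and g0: "g0 \<in> G"
  show "c g0 = 0"
  proof (rule ccontr)
    assume c0: "c g0 \<noteq> 0"
    have "g0 = (\<lambda>z. \<Sum>g\<in>G - {g0}. (- (c g / c g0)) * g z)"
    proof
      fix z
      have "(\<Sum>g\<in>G. c g * g z) = 0"
        using G by meson
      then have "c g0 * g0 z + (\<Sum>g\<in>G - {g0}. c g * g z) = 0"
        using G g0 by (simp add: sum.remove)
      with c0 have "g0 z = - (\<Sum>g\<in>G - {g0}. c g * g z) / c g0"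
        by (simp add: field_simps eq_neg_iff_add_eq_0)
      then show "g0 z = (\<Sum>g\<in>G - {g0}. (- (c g / c g0)) * g z)"
        by (simp add: sum_divide_distrib sum_negf)
    qed
    also have "\<dots> \<in> rc_gen src tgt C (F - {g0})"
      using G subset_rc_gen[of "F - {g0}" src tgt C]
      by (intro lsubspace_sum[OF lsubspace_rc_gen] lsubspace_scale[OF lsubspace_rc_gen]) auto
    finally show False
      using irr G g0 by (auto simp: rc_irredundant_def)
  qed
qed

lemma independent_if_rc_irredundant:
  assumes "F \<subseteq> multipaths tgt C" "rc_irredundant src tgt C F"
  shows "independent src tgt C F"
proof -
  have "rc_gen src tgt C {x} \<inter> F = {x}" if x: "x \<in> F" for x
  proof -
    have "y = x" if "y \<in> rc_gen src tgt C {x}" "y \<in> F" for y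
    proof (rule ccontr)
      assume "y \<noteq> x"
      then have "rc_gen src tgt C {x} \<subseteq> rc_gen src tgt C (F - {y})"
        using x by (intro rc_gen_mono) auto
      then show False
        using assms(2) that by (auto simp: rc_irredundant_def)
    qed
    then show ?thesis using x subset_rc_gen[of "{x}"] by blast
  qed
  then show ?thesis
    using assms lin_indep_if_rc_irredundant by (auto simp: independent_def)
qed

theorem corollary4p21:
  fixes src tgt :: "'a \<Rightarrow> 'v"
    and C I :: "(('v,'a) qpath \<Rightarrow> 'k::field) set"
  assumes "subcoalgebra src tgt C"
    and "\<exists>S. finite S \<and> generated_by src tgt C S I"
  shows "\<exists>I' F. right_coideal src tgt C I' \<and> I \<subseteq> I' \<and> finite F
           \<and> independent src tgt C F \<and> generated_by src tgt C F I'"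
proof -
  obtain S where S: "finite S" "generated_by src tgt C S I"
    using assms(2) by blast
  then have "S \<subseteq> C" by (auto simp: generated_by_def right_coideal_def)
  with assms(1) S(1) obtain M where M: "finite M" "M \<subseteq> multipaths tgt C" "S \<subseteq> rc_gen src tgt C M"
    by (rule finite_subset_rc_gen_multipaths)
  obtain F where F: "F \<subseteq> M" "rc_gen src tgt C F = rc_gen src tgt C M" "rc_irredundant src tgt C F"
    using exists_rc_irredundant_subset[OF M(1), where src = src and tgt = tgt and C = C] by blast
  have FC: "F \<subseteq> multipaths tgt C" using F(1) M(2) by blast
  then have coideal: "right_coideal src tgt C (rc_gen src tgt C F)"
    by (intro right_coideal_rc_gen[OF assms(1)]) (auto simp: multipaths_def)
  have "I \<subseteq> rc_gen src tgt C F"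
    using generated_by_subset_rc_gen[OF S(2)] rc_gen_least[OF M(3)] unfolding F(2) by (rule subset_trans)
  moreover have "independent src tgt C F"
    using independent_if_rc_irredundant[OF FC F(3)] .
  moreover have "finite F" using F(1) M(1) by (rule finite_subset)
  ultimately show ?thesis
    using coideal generated_by_rc_gen[OF coideal] by blast
qed

end
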